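(* Let $\delta_j,\delta_k$ be coprime integers with $1<\delta_j<\delta_k$, and let $(x'_j,x'_k)$ be a B\'ezout couple for $(\delta_j,\ \delta_k\bmod\delta_j)$, associated to $i=x'_j\delta_j+x'_k(\delta_k\bmod\delta_j)\le\delta_j$. Then $\big(x'_k,\ x'_j-x'_k\lfloor\delta_k/\delta_j\rfloor\big)$ is a B\'ezout couple for $(\delta_k,\delta_j)$ (associated to the same $i$).
   Context: For coprime positive integers $p,q$, a B\'ezout couple for $(p,q)$ associated to $i\in\{1,\ldots,\max\{p,q\}\}$ is a pair $(x,y)\in\mathbb Z^2$ with $xp+yq=i$ and either $0<y\le p$ (the $\lambda$-B\'ezout couple of $i$, unique) or $0<x\le q$ (the $\mu$-B\'ezout couple of $i$, unique). Note $\delta_k\bmod\delta_j\ge1$ is coprime to $\delta_j$. *)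

theory Defs
  imports Complex_Main
begin

definition lambda_bezout_couple :: "int \<Rightarrow> int \<Rightarrow> int \<Rightarrow> int \<times> int \<Rightarrow> bool" where
  "lambda_bezout_couple p q i xy \<longleftrightarrow>
     1 \<le> i \<and> i \<le> max p q \<and> fst xy * p + snd xy * q = i \<and> 0 < snd xy \<and> snd xy \<le> p"

definition mu_bezout_couple :: "int \<Rightarrow> int \<Rightarrow> int \<Rightarrow> int \<times> int \<Rightarrow> bool" where
  "mu_bezout_couple p q i xy \<longleftrightarrow>
     1 \<le> i \<and> i \<le> max p q \<and> fst xy * p + snd xy * q = i \<and> 0 < fst xy \<and> fst xy \<le> q"

definition bezout_couple :: "int \<Rightarrow> int \<Rightarrow> int \<Rightarrow> int \<times> int \<Rightarrow> bool" where
  "bezout_couple p q i xy \<longleftrightarrow> lambda_bezout_couple p q i xy \<or> mu_bezout_couple p q i xy"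

end

theory Submission
  imports Defs
begin

text \<open>Writing \<open>q = (q div p) * p + q mod p\<close> turns \<open>x p + y (q mod p)\<close> into
  \<open>y q + (x - y (q div p)) p\<close>. The bound \<open>0 < y \<le> p\<close> of a \<open>\<lambda>\<close>-couple is then literally
  the bound of a \<open>\<mu>\<close>-couple for \<open>(q, p)\<close>. For a \<open>\<mu>\<close>-couple, \<open>0 < x \<le> q mod p\<close> and
  \<open>i \<le> p\<close> force \<open>-p < y \<le> 0\<close>, which puts the new second coordinate in \<open>(0, q]\<close>.\<close>

lemma mod_step_eq:
  fixes p q x y :: int
  shows "x * p + y * (q mod p) = y * q + (x - y * (q div p)) * p"
proof -
  have "x * p + y * r = y * (d * p + r) + (x - y * d) * p" for d r :: int
    by (simp add: algebra_simps)
  from this[of "q mod p" "q div p"] show ?thesis by simp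
qed

lemma lambda_bezout_couple_mod_step:
  fixes p q x y i :: int
  assumes "0 < p" "p < q" "lambda_bezout_couple p (q mod p) i (x, y)"
  shows "mu_bezout_couple q p i (y, x - y * (q div p))"
proof -
  have "i \<le> p"
    using assms pos_mod_bound[of p q] by (simp add: lambda_bezout_couple_def)
  then show ?thesis
    using assms mod_step_eq[of x p y q]
    by (simp add: lambda_bezout_couple_def mu_bezout_couple_def)
qed

lemma mu_bezout_couple_mod_step:
  fixes p q x y i :: int
  assumes "0 < p" "p < q" "mu_bezout_couple p (q mod p) i (x, y)"
  shows "lambda_bezout_couple q p i (y, x - y * (q div p))"
proof -
  define r where "r = q mod p"
  define d where "d = q div p"
  have r_lt: "r < p" using assms(1) by (simp add: r_def)
  have couple: "1 \<le> i" "i \<le> p" "x * p + y * r = i" "0 < x" "x \<le> r"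
    using assms(3) r_lt by (auto simp: mu_bezout_couple_def r_def)
  have eq: "y * q + (x - y * d) * p = i"
    using couple(3) mod_step_eq[of x p y q] by (simp add: r_def d_def)
  have "p div p \<le> q div p"
    using assms(1,2) by (intro zdiv_mono1) auto
  then have d_pos: "1 \<le> d"
    using assms(1) by (simp add: d_def)
  have "y * r \<le> 0"
    using couple assms(1) by (smt (verit) mult_le_cancel_right1)
  then have y_nonpos: "y \<le> 0"
    using couple(4,5) by (smt (verit) mult_pos_pos)
  have "(- y) * r < p * r"
  proof -
    have "x * p \<le> r * p" using couple(5) assms(1) by simp
    then show ?thesis using couple(1,3) by (simp add: algebra_simps)
  qed
  moreover have "0 < r" using couple(4,5) by simp
  ultimately have "- y \<le> p - 1"
    using mult_less_cancel_right_pos[of r "- y" p] by simp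
  then have "(- y) * q \<le> (p - 1) * q"
    using assms by (intro mult_right_mono) auto
  then have "(x - y * d) * p \<le> q * p"
    using eq couple(2) assms by (simp add: algebra_simps)
  then have upper: "x - y * d \<le> q"
    using assms(1) by simp
  have "0 < x - y * d"
    using y_nonpos d_pos couple(4) by (smt (verit) mult_nonpos_nonneg)
  then show ?thesis
    using upper eq couple(1,2) assms(2)
    by (simp add: lambda_bezout_couple_def d_def)
qed

lemma bezout_couple_mod_step:
  fixes p q x y i :: int
  assumes "0 < p" "p < q" "bezout_couple p (q mod p) i (x, y)"
  shows "bezout_couple q p i (y, x - y * (q div p))"
  using assms lambda_bezout_couple_mod_step mu_bezout_couple_mod_step
  unfolding bezout_couple_def by blast

theorem lemma3p3:
  fixes dj dk xj xk i :: int
  assumes "coprime dj dk" and "1 < dj" and "dj < dk"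
    and "bezout_couple dj (dk mod dj) i (xj, xk)"
  shows "bezout_couple dk dj i (xk, xj - xk * \<lfloor>of_int dk / (of_int dj :: real)\<rfloor>)"
proof -
  have "\<lfloor>of_int dk / (of_int dj :: real)\<rfloor> = dk div dj"
    by (rule floor_divide_of_int_eq)
  then show ?thesis
    using bezout_couple_mod_step[of dj dk i xj xk] assms(2-4) by simp
qed

end
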